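(* Consider the setting described in the context, for a family $(f^{(D)})_{D\ge1}$ of $(\alpha,\beta)$-class functions. Given $\epsilon,\delta>0$, there exist $\Delta$ and $N$ with $$\Delta=\Omega\big(\epsilon^{1+\frac1\beta}\big),\qquad N=O\Big(\epsilon^{-\frac{1}{2\beta}}\log\big(\epsilon^{-1}\delta^{-1}\big)\Big)$$ such that the following algorithm returns a subnetwork $\hat f$ of $\mathcal{S}[w^\ast_\lambda]$ whose hidden layer has at most $N$ nodes and which, with probability greater than $1-\delta$, satisfies $\sum_{\mathbf{x}}\hat p_{\mathrm{data}}(\mathbf{x})|\mathcal{S}[w^\ast_\lambda](\mathbf{x})-\hat f(\mathbf{x})|^2=O(\epsilon)$. The algorithm: draw $N$ independent samples $(\mathbf{a},b)$ from $p^\ast_{\lambda,\Delta}$, let $\hat{\mathbb{W}}$ be the set of sampled parameters, and set $\hat f(\mathbf{x})=\sum_{(\mathbf{a},b)\in\hat{\mathbb{W}}}\hat w^\ast(\mathbf{a},b)g((\mathbf{a}^\top\mathbf{x}-b)\bmod P)$, where the weights $\hat w^\ast$ on the sampled nodes are trained by convex optimization on the $M$ examples.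
   Context: $P$ is a fixed prime, $\mathbb{Z}_P=\{0,\dots,P-1\}$ with arithmetic mod $P$. $g:\mathbb{Z}_P\to\mathbb{R}$ is an activation function with $\sum_bg(b)=0$, $\sum_b|g(b)|^2=1$. For $w:\mathbb{Z}_P^D\times\mathbb{Z}_P\to\mathbb{R}$, $\mathcal{S}[w](\mathbf{x})=P^{-D/2}\sum_{\mathbf{a}\in\mathbb{Z}_P^D,b\in\mathbb{Z}_P}w(\mathbf{a},b)g((\mathbf{a}^\top\mathbf{x}-b)\bmod P)$; the node with parameter $(\mathbf{a},b)$ has weight $w(\mathbf{a},b)$. For each $D$, $f=f^{(D)}$ is an unknown function, and we are given $M$ examples $(\mathbf{x}_m,f(\mathbf{x}_m))$, $\mathbf{x}_m\in\mathbb{Z}_P^D$, with empirical distribution $\hat p_{\mathrm{data}}$. For $\lambda>0$, $w^\ast_\lambda=\arg\min_w\{\sum_{\mathbf{x}}\hat p_{\mathrm{data}}(\mathbf{x})|f(\mathbf{x})-\mathcal{S}[w](\mathbf{x})|^2+\lambda\sum_{\mathbf{a},b}|P^{-D/2}w(\mathbf{a},b)|^2\}$. Order all $P^{D+1}$ parameters as $(\mathbf{a}_j,b_j)$, $j=1,\dots,P^{D+1}$, so that $|w^\ast_\lambda(\mathbf{a}_1,b_1)|\ge|w^\ast_\lambda(\mathbf{a}_2,b_2)|\ge\cdots$. The family is of $(\alpha,\beta)$-class: there are constants $\alpha,\beta>0$ such that for all $D$ and $j$, $|P^{-D/2}w^\ast_\lambda(\mathbf{a}_j,b_j)|\le\alpha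 j^{-(1+\beta)}$. For $\Delta>0$, $p^\ast_{\lambda,\Delta}(\mathbf{a},b)=\frac1Z\frac{|P^{-D/2}w^\ast_\lambda(\mathbf{a},b)|^2}{|P^{-D/2}w^\ast_\lambda(\mathbf{a},b)|^2+\Delta}$ with $Z$ the normalizing constant. The $O,\Omega$ constants may depend on $\alpha,\beta$ but not on $D$. *)

theory Defs
  imports Complex_Main "HOL-Computational_Algebra.Primes"
begin

text \<open>Z_P^D is represented by functions nat => nat with entries below P on the
first D coordinates and 0 elsewhere (canonical representatives).\<close>

definition vecs :: "nat \<Rightarrow> nat \<Rightarrow> (nat \<Rightarrow> nat) set" where
  "vecs P D = {x. (\<forall>i<D. x i < P) \<and> (\<forall>i\<ge>D. x i = 0)}"

definition params :: "nat \<Rightarrow> nat \<Rightarrow> ((nat \<Rightarrow> nat) \<times> nat) set" where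
  "params P D = vecs P D \<times> {..<P}"

definition node :: "nat \<Rightarrow> nat \<Rightarrow> (nat \<Rightarrow> real) \<Rightarrow> (nat \<Rightarrow> nat) \<Rightarrow> nat \<Rightarrow> (nat \<Rightarrow> nat) \<Rightarrow> real" where
  "node P D g a b x = g (nat ((int (\<Sum>i<D. a i * x i) - int b) mod int P))"

definition sw :: "nat \<Rightarrow> nat \<Rightarrow> ((nat \<Rightarrow> nat) \<times> nat \<Rightarrow> real) \<Rightarrow> (nat \<Rightarrow> nat) \<times> nat \<Rightarrow> real" where
  "sw P D w q = real P powr (- real D / 2) * w q"

definition netS :: "nat \<Rightarrow> nat \<Rightarrow> (nat \<Rightarrow> real) \<Rightarrow> ((nat \<Rightarrow> nat) \<times> nat \<Rightarrow> real) \<Rightarrow> (nat \<Rightarrow> nat) \<Rightarrow> real" where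
  "netS P D g w x = real P powr (- real D / 2) * (\<Sum>(a,b)\<in>params P D. w (a,b) * node P D g a b x)"

definition phat :: "(nat \<Rightarrow> nat) list \<Rightarrow> (nat \<Rightarrow> nat) \<Rightarrow> real" where
  "phat xs x = real (card {m. m < length xs \<and> xs ! m = x}) / real (length xs)"

definition objective :: "nat \<Rightarrow> nat \<Rightarrow> (nat \<Rightarrow> real) \<Rightarrow> real \<Rightarrow> (nat \<Rightarrow> nat) list \<Rightarrow> ((nat \<Rightarrow> nat) \<Rightarrow> real)
    \<Rightarrow> ((nat \<Rightarrow> nat) \<times> nat \<Rightarrow> real) \<Rightarrow> real" where
  "objective P D g lam xs f w =
     (\<Sum>x\<in>vecs P D. phat xs x * (f x - netS P D g w x)\<^sup>2)
     + lam * (\<Sum>q\<in>params P D. (sw P D w q)\<^sup>2)"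

definition is_wstar :: "nat \<Rightarrow> nat \<Rightarrow> (nat \<Rightarrow> real) \<Rightarrow> real \<Rightarrow> (nat \<Rightarrow> nat) list \<Rightarrow> ((nat \<Rightarrow> nat) \<Rightarrow> real)
    \<Rightarrow> ((nat \<Rightarrow> nat) \<times> nat \<Rightarrow> real) \<Rightarrow> bool" where
  "is_wstar P D g lam xs f w \<longleftrightarrow> (\<forall>w'. objective P D g lam xs f w \<le> objective P D g lam xs f w')"

definition ab_class :: "nat \<Rightarrow> nat \<Rightarrow> real \<Rightarrow> real \<Rightarrow> ((nat \<Rightarrow> nat) \<times> nat \<Rightarrow> real) \<Rightarrow> bool" where
  "ab_class P D \<alpha> \<beta> w \<longleftrightarrow>
     (\<exists>\<sigma>. bij_betw \<sigma> {1..card (params P D)} (params P D)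
        \<and> (\<forall>i\<in>{1..card (params P D)}. \<forall>j\<in>{1..card (params P D)}. i \<le> j \<longrightarrow> \<bar>w (\<sigma> j)\<bar> \<le> \<bar>w (\<sigma> i)\<bar>)
        \<and> (\<forall>j\<in>{1..card (params P D)}. \<bar>sw P D w (\<sigma> j)\<bar> \<le> \<alpha> * real j powr (-(1 + \<beta>))))"

text \<open>The sampling distribution p*_{lambda,Delta}. Convention: if the normalizing constant Z
is 0 (i.e. w* = 0) we use the uniform distribution on the parameters.\<close>
definition pstar :: "nat \<Rightarrow> nat \<Rightarrow> real \<Rightarrow> ((nat \<Rightarrow> nat) \<times> nat \<Rightarrow> real) \<Rightarrow> (nat \<Rightarrow> nat) \<times> nat \<Rightarrow> real" where
  "pstar P D \<Delta> w q =
     (let c = (\<lambda>r. (sw P D w r)\<^sup>2 / ((sw P D w r)\<^sup>2 + \<Delta>));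
          Z = (\<Sum>r\<in>params P D. c r)
      in if Z = 0 then 1 / real (card (params P D)) else c q / Z)"

definition subnet :: "nat \<Rightarrow> nat \<Rightarrow> (nat \<Rightarrow> real) \<Rightarrow> ((nat \<Rightarrow> nat) \<times> nat) set
    \<Rightarrow> ((nat \<Rightarrow> nat) \<times> nat \<Rightarrow> real) \<Rightarrow> (nat \<Rightarrow> nat) \<Rightarrow> real" where
  "subnet P D g W v x = (\<Sum>(a,b)\<in>W. v (a,b) * node P D g a b x)"

definition sub_objective :: "nat \<Rightarrow> nat \<Rightarrow> (nat \<Rightarrow> real) \<Rightarrow> real \<Rightarrow> (nat \<Rightarrow> nat) list \<Rightarrow> ((nat \<Rightarrow> nat) \<Rightarrow> real)
    \<Rightarrow> ((nat \<Rightarrow> nat) \<times> nat) set \<Rightarrow> ((nat \<Rightarrow> nat) \<times> nat \<Rightarrow> real) \<Rightarrow> real" where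
  "sub_objective P D g lam xs f W v =
     (\<Sum>x\<in>vecs P D. phat xs x * (f x - subnet P D g W v x)\<^sup>2)
     + lam * (\<Sum>q\<in>W. (v q)\<^sup>2)"

definition is_trained :: "nat \<Rightarrow> nat \<Rightarrow> (nat \<Rightarrow> real) \<Rightarrow> real \<Rightarrow> (nat \<Rightarrow> nat) list \<Rightarrow> ((nat \<Rightarrow> nat) \<Rightarrow> real)
    \<Rightarrow> ((nat \<Rightarrow> nat) \<times> nat) set \<Rightarrow> ((nat \<Rightarrow> nat) \<times> nat \<Rightarrow> real) \<Rightarrow> bool" where
  "is_trained P D g lam xs f W v \<longleftrightarrow>
     (\<forall>v'. sub_objective P D g lam xs f W v \<le> sub_objective P D g lam xs f W v')"

text \<open>Probability that the set of N i.i.d. samples from p*_{lambda,Delta} satisfies E.\<close>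
definition sample_prob :: "nat \<Rightarrow> nat \<Rightarrow> real \<Rightarrow> ((nat \<Rightarrow> nat) \<times> nat \<Rightarrow> real) \<Rightarrow> nat
    \<Rightarrow> (((nat \<Rightarrow> nat) \<times> nat) set \<Rightarrow> bool) \<Rightarrow> real" where
  "sample_prob P D \<Delta> w N E =
     (\<Sum>ss\<in>{ss. set ss \<subseteq> params P D \<and> length ss = N}.
        prod_list (map (pstar P D \<Delta> w) ss) * (if E (set ss) then 1 else 0))"

end

(*
  The weights trained on the sampled nodes W do at least as well in the ridge objective
  as w* restricted to W. Since w* minimises that objective, which is Pythagorean around its
  minimiser, the squared error against w* is at most (1 + lam) times the squared l1-mass of
  the weights outside W.

  Take K ~ eps^(-1/(2 beta)) and the threshold t = alpha K^(-(1+beta)). By the power-law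
  decay at most K weights exceed t, and the l1-mass of the remaining ones is
  O(K^(-beta)) = O(sqrt eps). With Delta = t^2 each of the large weights is drawn with
  probability at least 1/(2K(1+1/beta)), so by the union bound N ~ K log(K/delta) draws
  contain all of them except with probability delta/2.
*)

theory Submission
  imports Defs "HOL-Analysis.L2_Norm"
begin

section \<open>Sampling with replacement\<close>

definition sample_set_prob :: "('q \<Rightarrow> real) \<Rightarrow> 'q set \<Rightarrow> nat \<Rightarrow> ('q set \<Rightarrow> bool) \<Rightarrow> real" where
  "sample_set_prob p Q N E =
     (\<Sum>ss\<in>{ss. set ss \<subseteq> Q \<and> length ss = N}. prod_list (map p ss) * (if E (set ss) then 1 else 0))"

lemma sample_prob_eq_sample_set_prob:
  "sample_prob P D \<Delta> w N E = sample_set_prob (pstar P D \<Delta> w) (params P D) N E"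
  unfolding sample_prob_def sample_set_prob_def ..

lemma sum_prod_list_lists_length:
  assumes "finite A"
  shows "(\<Sum>ss\<in>{ss. set ss \<subseteq> A \<and> length ss = n}. prod_list (map p ss)) = (\<Sum>a\<in>A. p a :: real) ^ n"
proof (induction n)
  case 0
  have "{ss. set ss \<subseteq> A \<and> length ss = 0} = {[]}" by auto
  then show ?case by simp
next
  case (Suc n)
  have "(\<Sum>ss\<in>{ss. set ss \<subseteq> A \<and> length ss = Suc n}. prod_list (map p ss))
      = (\<Sum>(xs, a)\<in>{ss. set ss \<subseteq> A \<and> length ss = n} \<times> A. p a * prod_list (map p xs))"
    unfolding lists_length_Suc_eq by (subst sum.reindex) (auto simp: inj_on_def split_def)
  also have "\<dots> = (\<Sum>a\<in>A. p a) * (\<Sum>xs\<in>{ss. set ss \<subseteq> A \<and> length ss = n}. prod_list (map p xs))"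
    by (simp add: sum.cartesian_product[symmetric] sum_distrib_left sum_distrib_right sum.swap[of _ A])
  finally show ?case using Suc by simp
qed

lemma sample_set_prob_avoid:
  assumes Q: "finite Q" and q: "q \<in> Q" and p1: "(\<Sum>r\<in>Q. p r) = 1"
  shows "sample_set_prob p Q N (\<lambda>W. q \<notin> W) = (1 - p q) ^ N"
proof -
  have "sample_set_prob p Q N (\<lambda>W. q \<notin> W)
      = (\<Sum>ss\<in>{ss\<in>{ss. set ss \<subseteq> Q \<and> length ss = N}. q \<notin> set ss}. prod_list (map p ss))"
    unfolding sample_set_prob_def
    by (subst sum.inter_filter[OF finite_lists_length_eq[OF Q]]) (auto intro!: sum.cong)
  also have "{ss\<in>{ss. set ss \<subseteq> Q \<and> length ss = N}. q \<notin> set ss} = {ss. set ss \<subseteq> Q - {q} \<and> length ss = N}"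
    by auto
  also have "(\<Sum>ss\<in>\<dots>. prod_list (map p ss)) = (\<Sum>r\<in>Q - {q}. p r) ^ N"
    using Q by (intro sum_prod_list_lists_length) auto
  also have "(\<Sum>r\<in>Q - {q}. p r) = 1 - p q"
    using p1 Q q by (simp add: sum_diff1)
  finally show ?thesis .
qed

lemma sample_set_prob_ge_cover:
  assumes Q: "finite Q" and p0: "\<And>q. q \<in> Q \<Longrightarrow> 0 \<le> p q" and p1: "(\<Sum>q\<in>Q. p q) = 1"
    and SQ: "S \<subseteq> Q" and cover: "\<And>W. W \<subseteq> Q \<Longrightarrow> S \<subseteq> W \<Longrightarrow> card W \<le> N \<Longrightarrow> E W"
  shows "1 - (\<Sum>q\<in>S. (1 - p q) ^ N) \<le> sample_set_prob p Q N E"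
proof -
  let ?L = "{ss. set ss \<subseteq> Q \<and> length ss = N}"
  let ?miss = "\<lambda>ss. \<Sum>q\<in>S. if q \<notin> set ss then 1 else 0 :: real"
  have S: "finite S" using SQ Q finite_subset by blast
  have union_bound: "1 - ?miss ss \<le> (if E (set ss) then 1 else 0)" if "ss \<in> ?L" for ss
  proof (cases "S \<subseteq> set ss")
    case True
    then have "E (set ss)" using that by (intro cover) (auto simp: card_length)
    then show ?thesis by (simp add: sum_nonneg)
  next
    case False
    then obtain q where "q \<in> S" "q \<notin> set ss" by blast
    then have "1 \<le> ?miss ss"
      using member_le_sum[of q S "\<lambda>q. if q \<notin> set ss then 1 else 0 :: real"] S by simp
    then show ?thesis by simp
  qed
  have "1 - (\<Sum>q\<in>S. (1 - p q) ^ N)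
      = (\<Sum>ss\<in>?L. prod_list (map p ss)) - (\<Sum>q\<in>S. sample_set_prob p Q N (\<lambda>W. q \<notin> W))"
    using sum_prod_list_lists_length[OF Q, of p N] sample_set_prob_avoid[OF Q _ p1] SQ p1
    by (auto intro!: sum.cong)
  also have "\<dots> = (\<Sum>ss\<in>?L. prod_list (map p ss) * (1 - ?miss ss))"
    unfolding sample_set_prob_def
    by (simp add: right_diff_distrib sum_subtractf sum_distrib_left sum.swap[of _ S])
  also have "\<dots> \<le> sample_set_prob p Q N E"
    unfolding sample_set_prob_def using p0 union_bound
    by (intro sum_mono mult_left_mono) (auto intro!: prod_list_nonneg p0)
  finally show ?thesis .
qed

section \<open>Ridge regression over a finite dictionary\<close>

definition dict_sum :: "'q set \<Rightarrow> ('q \<Rightarrow> 'x \<Rightarrow> real) \<Rightarrow> ('q \<Rightarrow> real) \<Rightarrow> 'x \<Rightarrow> real" where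
  "dict_sum Q \<phi> z x = (\<Sum>q\<in>Q. z q * \<phi> q x)"

definition ridge_objective :: "'x set \<Rightarrow> 'q set \<Rightarrow> ('q \<Rightarrow> 'x \<Rightarrow> real) \<Rightarrow> ('x \<Rightarrow> real) \<Rightarrow> real
    \<Rightarrow> ('x \<Rightarrow> real) \<Rightarrow> ('q \<Rightarrow> real) \<Rightarrow> real" where
  "ridge_objective V Q \<phi> \<mu> lam f z =
     (\<Sum>x\<in>V. \<mu> x * (f x - dict_sum Q \<phi> z x)\<^sup>2) + lam * (\<Sum>q\<in>Q. (z q)\<^sup>2)"

lemma dict_sum_add_scaled:
  "dict_sum Q \<phi> (\<lambda>q. u q + s * d q) x = dict_sum Q \<phi> u x + s * dict_sum Q \<phi> d x"
  unfolding dict_sum_def by (simp add: algebra_simps sum.distrib sum_distrib_left)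

lemma ridge_objective_nonneg:
  "(\<And>x. x \<in> V \<Longrightarrow> 0 \<le> \<mu> x) \<Longrightarrow> 0 \<le> lam \<Longrightarrow> 0 \<le> ridge_objective V Q \<phi> \<mu> lam f z"
  unfolding ridge_objective_def by (intro add_nonneg_nonneg sum_nonneg mult_nonneg_nonneg) auto

lemma linear_coeff_eq_0_if_quadratic_nonneg:
  fixes L C :: real
  assumes nonneg: "\<And>s. 0 \<le> 2 * s * L + s\<^sup>2 * C" and "0 \<le> C"
  shows "L = 0"
proof (rule ccontr)
  assume "L \<noteq> 0"
  define s where "s = - L / (C + 1)"
  have s: "s * (C + 1) = - L" using \<open>0 \<le> C\<close> unfolding s_def by simp
  have "(C + 1)\<^sup>2 * (2 * s * L + s\<^sup>2 * C) = 2 * (s * (C + 1)) * L * (C + 1) + (s * (C + 1))\<^sup>2 * C"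
    by (simp add: power2_eq_square algebra_simps)
  also have "\<dots> = - L\<^sup>2 * (C + 2)"
    unfolding s by (simp add: power2_eq_square algebra_simps)
  also have "\<dots> < 0"
    using \<open>L \<noteq> 0\<close> \<open>0 \<le> C\<close> by (simp add: mult_neg_pos)
  finally show False
    using nonneg[of s] by (simp add: zero_le_mult_iff not_le[symmetric])
qed

text \<open>At a minimiser the linear term of the expansion vanishes, so the objective is
  Pythagorean around it.\<close>
lemma ridge_objective_minimizer_add:
  assumes min: "\<And>z. ridge_objective V Q \<phi> \<mu> lam f u \<le> ridge_objective V Q \<phi> \<mu> lam f z"
    and \<mu>: "\<And>x. x \<in> V \<Longrightarrow> 0 \<le> \<mu> x" and lam: "0 \<le> lam"
  shows "ridge_objective V Q \<phi> \<mu> lam f (\<lambda>q. u q + d q)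
       = ridge_objective V Q \<phi> \<mu> lam f u + ridge_objective V Q \<phi> \<mu> lam (\<lambda>_. 0) d"
proof -
  let ?J = "ridge_objective V Q \<phi> \<mu> lam"
  define L where "L = lam * (\<Sum>q\<in>Q. u q * d q)
      - (\<Sum>x\<in>V. \<mu> x * (f x - dict_sum Q \<phi> u x) * dict_sum Q \<phi> d x)"
  have expand: "?J f (\<lambda>q. u q + s * d q) = ?J f u + 2 * s * L + s\<^sup>2 * ?J (\<lambda>_. 0) d" for s
    unfolding ridge_objective_def dict_sum_add_scaled L_def
    by (simp add: power2_eq_square algebra_simps sum.distrib sum_distrib_left sum_subtractf)
  have "L = 0"
  proof (rule linear_coeff_eq_0_if_quadratic_nonneg)
    show "0 \<le> 2 * s * L + s\<^sup>2 * ?J (\<lambda>_. 0) d" for s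
      using min[of "\<lambda>q. u q + s * d q"] expand[of s] by simp
  qed (rule ridge_objective_nonneg[OF \<mu> lam])
  then show ?thesis using expand[of 1] by simp
qed

lemma sum_power2_le_power2_sum_abs:
  fixes d :: "'q \<Rightarrow> real"
  shows "(\<Sum>q\<in>Q. (d q)\<^sup>2) \<le> (\<Sum>q\<in>Q. \<bar>d q\<bar>)\<^sup>2"
proof -
  have "(\<Sum>q\<in>Q. (d q)\<^sup>2) = (L2_set d Q)\<^sup>2"
    by (simp add: L2_set_def sum_nonneg)
  also have "\<dots> \<le> (\<Sum>q\<in>Q. \<bar>d q\<bar>)\<^sup>2"
    by (intro power_mono L2_set_le_sum_abs L2_set_nonneg)
  finally show ?thesis .
qed

lemma ridge_objective_zero_target_le:
  assumes \<mu>0: "\<And>x. x \<in> V \<Longrightarrow> 0 \<le> \<mu> x" and \<mu>1: "(\<Sum>x\<in>V. \<mu> x) \<le> 1"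
    and \<phi>: "\<And>q x. q \<in> Q \<Longrightarrow> x \<in> V \<Longrightarrow> \<bar>\<phi> q x\<bar> \<le> 1" and lam: "0 \<le> lam"
  shows "ridge_objective V Q \<phi> \<mu> lam (\<lambda>_. 0) d \<le> (1 + lam) * (\<Sum>q\<in>Q. \<bar>d q\<bar>)\<^sup>2"
proof -
  let ?T = "\<Sum>q\<in>Q. \<bar>d q\<bar>"
  have "\<bar>dict_sum Q \<phi> d x\<bar> \<le> ?T" if "x \<in> V" for x
    unfolding dict_sum_def
    using \<phi> that by (intro order_trans[OF sum_abs] sum_mono) (simp add: abs_mult mult_left_le)
  then have "(dict_sum Q \<phi> d x)\<^sup>2 \<le> ?T\<^sup>2" if "x \<in> V" for x
    using that by (metis abs_ge_zero power2_abs power_mono)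
  then have "(\<Sum>x\<in>V. \<mu> x * (dict_sum Q \<phi> d x)\<^sup>2) \<le> (\<Sum>x\<in>V. \<mu> x) * ?T\<^sup>2"
    using \<mu>0 by (simp add: sum_distrib_right sum_mono mult_left_mono)
  also have "\<dots> \<le> ?T\<^sup>2"
    using \<mu>1 by (simp add: mult_left_le_one_le sum_nonneg \<mu>0)
  finally have "(\<Sum>x\<in>V. \<mu> x * (dict_sum Q \<phi> d x)\<^sup>2) \<le> ?T\<^sup>2" .
  moreover have "lam * (\<Sum>q\<in>Q. (d q)\<^sup>2) \<le> lam * ?T\<^sup>2"
    using lam by (intro mult_left_mono sum_power2_le_power2_sum_abs)
  ultimately show ?thesis
    unfolding ridge_objective_def by (simp add: algebra_simps)
qed

text \<open>By the Pythagorean identity, the error of \<open>v\<close> is at most the excess objective of the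
  truncation of \<open>u\<close> to \<open>W\<close>.\<close>
lemma ridge_restricted_minimizer_error_le:
  assumes Q: "finite Q" and W: "W \<subseteq> Q"
    and \<mu>0: "\<And>x. x \<in> V \<Longrightarrow> 0 \<le> \<mu> x" and \<mu>1: "(\<Sum>x\<in>V. \<mu> x) \<le> 1"
    and \<phi>: "\<And>q x. q \<in> Q \<Longrightarrow> x \<in> V \<Longrightarrow> \<bar>\<phi> q x\<bar> \<le> 1" and lam: "0 \<le> lam"
    and min: "\<And>z. ridge_objective V Q \<phi> \<mu> lam f u \<le> ridge_objective V Q \<phi> \<mu> lam f z"
    and v: "ridge_objective V Q \<phi> \<mu> lam f v
          \<le> ridge_objective V Q \<phi> \<mu> lam f (\<lambda>q. if q \<in> W then u q else 0)"
  shows "(\<Sum>x\<in>V. \<mu> x * (dict_sum Q \<phi> u x - dict_sum Q \<phi> v x)\<^sup>2) \<le> (1 + lam) * (\<Sum>q\<in>Q - W. \<bar>u q\<bar>)\<^sup>2"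
proof -
  let ?J = "ridge_objective V Q \<phi> \<mu> lam"
  have split: "?J f z = ?J f u + ?J (\<lambda>_. 0) (\<lambda>q. z q - u q)" for z
    using ridge_objective_minimizer_add[OF min \<mu>0 lam, of "\<lambda>q. z q - u q"] by simp
  have "(\<Sum>x\<in>V. \<mu> x * (dict_sum Q \<phi> u x - dict_sum Q \<phi> v x)\<^sup>2)
      = (\<Sum>x\<in>V. \<mu> x * (0 - dict_sum Q \<phi> (\<lambda>q. v q - u q) x)\<^sup>2)"
    unfolding dict_sum_def by (simp add: algebra_simps sum_subtractf)
  also have "\<dots> \<le> ?J (\<lambda>_. 0) (\<lambda>q. v q - u q)"
    unfolding ridge_objective_def using lam by (simp add: sum_nonneg)
  also have "\<dots> \<le> ?J (\<lambda>_. 0) (\<lambda>q. (if q \<in> W then u q else 0) - u q)"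
    using v split[of v] split[of "\<lambda>q. if q \<in> W then u q else 0"] by simp
  also have "\<dots> \<le> (1 + lam) * (\<Sum>q\<in>Q. \<bar>(if q \<in> W then u q else 0) - u q\<bar>)\<^sup>2"
    by (rule ridge_objective_zero_target_le[OF \<mu>0 \<mu>1 \<phi> lam])
  also have "(\<Sum>q\<in>Q. \<bar>(if q \<in> W then u q else 0) - u q\<bar>) = (\<Sum>q\<in>Q - W. \<bar>u q\<bar>)"
    using Q by (intro sum.mono_neutral_cong_right) auto
  finally show ?thesis .
qed

section \<open>Power-law decay\<close>

lemma one_add_mult_le_powr_neg:
  fixes x b :: real
  assumes "0 \<le> x" "x < 1" "0 < b"
  shows "1 + b * x \<le> (1 - x) powr (- b)"
proof -
  have "ln (1 - x) \<le> - x"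
    using ln_le_minus_one[of "1 - x"] assms by simp
  then have "b * x \<le> - b * ln (1 - x)"
    using mult_left_mono[of "ln (1 - x)" "- x" b] assms by simp
  then have "1 + b * x \<le> exp (- b * ln (1 - x))"
    using exp_ge_add_one_self[of "b * x"] by (meson exp_le_cancel_iff order_trans)
  also have "\<dots> = (1 - x) powr (- b)"
    using assms by (simp add: powr_def)
  finally show ?thesis .
qed

lemma powr_neg_le_telescoping:
  fixes b :: real
  assumes "0 < b" "2 \<le> j"
  shows "real j powr (-(1 + b)) \<le> (real (j - 1) powr (- b) - real j powr (- b)) / b"
proof -
  have j: "0 < real j" using assms by simp
  have "real j powr (- b) * (1 + b * (1 / real j))
      \<le> real j powr (- b) * (1 - 1 / real j) powr (- b)"
    using one_add_mult_le_powr_neg[of "1 / real j" b] assms by (intro mult_left_mono) auto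
  also have "\<dots> = real (j - 1) powr (- b)"
    using assms j by (simp add: powr_mult[symmetric] right_diff_distrib)
  finally have "b * (real j powr (- b) / real j) \<le> real (j - 1) powr (- b) - real j powr (- b)"
    by (simp add: algebra_simps)
  moreover have "real j powr (-(1 + b)) = real j powr (- b) / real j"
  proof -
    have "-(1 + b) = - b - 1" by simp
    then show ?thesis using j by (simp only: powr_diff) simp
  qed
  ultimately have "b * real j powr (-(1 + b)) \<le> real (j - 1) powr (- b) - real j powr (- b)"
    by simp
  then show ?thesis
    using assms by (simp add: pos_le_divide_eq mult.commute)
qed

lemma sum_powr_tail_le:
  fixes b :: real
  assumes "0 < b" "1 \<le> K"
  shows "(\<Sum>j\<in>{K<..n}. real j powr (-(1 + b))) \<le> real K powr (- b) / b"
proof (cases "K \<le> n")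
  case True
  then have "(\<Sum>j\<in>{K<..n}. real j powr (-(1 + b))) \<le> (real K powr (- b) - real n powr (- b)) / b"
  proof (induction n rule: dec_induct)
    case (step m)
    have "{K<..Suc m} = insert (Suc m) {K<..m}" using step.hyps by auto
    then show ?case
      using step.IH powr_neg_le_telescoping[of b "Suc m"] assms step.hyps
      by (simp add: diff_divide_distrib)
  qed simp
  also have "\<dots> \<le> real K powr (- b) / b"
    using assms by (simp add: divide_right_mono)
  finally show ?thesis .
qed (use assms in simp)

definition decay_threshold :: "real \<Rightarrow> real \<Rightarrow> nat \<Rightarrow> real" where
  "decay_threshold \<alpha> \<beta> K = \<alpha> * real K powr (-(1 + \<beta>))"

lemma real_mult_decay_threshold:
  "1 \<le> K \<Longrightarrow> real K * decay_threshold \<alpha> \<beta> K = \<alpha> * real K powr (- \<beta>)"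
  unfolding decay_threshold_def by (simp add: powr_mult_base algebra_simps)

lemma decay_threshold_pos: "0 < \<alpha> \<Longrightarrow> 1 \<le> K \<Longrightarrow> 0 < decay_threshold \<alpha> \<beta> K"
  unfolding decay_threshold_def by simp

text \<open>Unlike in \<open>ab_class\<close>, the enumeration \<open>\<sigma>\<close> need not sort the weights by size.\<close>
locale power_law_decay =
  fixes Q :: "'q set" and u :: "'q \<Rightarrow> real" and \<sigma> :: "nat \<Rightarrow> 'q" and n :: nat and \<alpha> \<beta> :: real
  assumes bij: "bij_betw \<sigma> {1..n} Q"
    and decay: "\<And>j. j \<in> {1..n} \<Longrightarrow> \<bar>u (\<sigma> j)\<bar> \<le> \<alpha> * real j powr (-(1 + \<beta>))"
    and alpha_pos: "0 < \<alpha>" and beta_pos: "0 < \<beta>"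
begin

lemma finite_Q: "finite Q"
  using bij bij_betw_finite by blast

lemma sum_le_head_tail:
  assumes h: "\<And>j. j \<in> {1..n} \<Longrightarrow> h (\<sigma> j) \<le> (if j \<le> K then A else C * real j powr (-(1 + \<beta>)))"
    and "0 \<le> A" "0 \<le> C" "1 \<le> K"
  shows "(\<Sum>q\<in>Q. h q) \<le> real K * A + C * real K powr (- \<beta>) / \<beta>"
proof -
  have "(\<Sum>q\<in>Q. h q) = (\<Sum>j\<in>{1..n}. h (\<sigma> j))"
    by (rule sum.reindex_bij_betw[OF bij, symmetric])
  also have "\<dots> \<le> (\<Sum>j\<in>{1..n}. if j \<le> K then A else C * real j powr (-(1 + \<beta>)))"
    using h by (rule sum_mono)
  also have "\<dots> = (\<Sum>j\<in>{1..min n K}. A) + (\<Sum>j\<in>{K<..n}. C * real j powr (-(1 + \<beta>)))"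
  proof -
    have "{1..n} \<inter> {j. j \<le> K} = {1..min n K}" "{1..n} \<inter> - {j. j \<le> K} = {K<..n}"
      using \<open>1 \<le> K\<close> by auto
    then show ?thesis by (simp only: sum.If_cases[OF finite_atLeastAtMost])
  qed
  also have "(\<Sum>j\<in>{1..min n K}. A) \<le> real K * A"
    using \<open>0 \<le> A\<close> by (simp add: mult_right_mono)
  also have "(\<Sum>j\<in>{K<..n}. C * real j powr (-(1 + \<beta>))) \<le> C * real K powr (- \<beta>) / \<beta>"
    using mult_left_mono[OF sum_powr_tail_le[OF beta_pos \<open>1 \<le> K\<close>, of n] \<open>0 \<le> C\<close>]
    by (simp add: sum_distrib_left)
  finally show ?thesis by simp
qed

lemma sum_abs_le: "(\<Sum>q\<in>Q. \<bar>u q\<bar>) \<le> \<alpha> * (1 + 1 / \<beta>)"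
proof -
  have "\<bar>u (\<sigma> j)\<bar> \<le> (if j \<le> 1 then \<alpha> else \<alpha> * real j powr (-(1 + \<beta>)))" if "j \<in> {1..n}" for j
    using decay[OF that] that by (cases "j = 1") auto
  then have "(\<Sum>q\<in>Q. \<bar>u q\<bar>) \<le> real 1 * \<alpha> + \<alpha> * real 1 powr (- \<beta>) / \<beta>"
    using alpha_pos by (intro sum_le_head_tail) auto
  then show ?thesis by (simp add: algebra_simps)
qed

context
  fixes K :: nat
  assumes K: "1 \<le> K"
begin

lemma card_large_le: "card {q\<in>Q. decay_threshold \<alpha> \<beta> K \<le> \<bar>u q\<bar>} \<le> K"
proof -
  have "{q\<in>Q. decay_threshold \<alpha> \<beta> K \<le> \<bar>u q\<bar>} \<subseteq> \<sigma> ` {1..K}"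
  proof
    fix q assume q: "q \<in> {q\<in>Q. decay_threshold \<alpha> \<beta> K \<le> \<bar>u q\<bar>}"
    then obtain j where j: "j \<in> {1..n}" "q = \<sigma> j"
      using bij by (auto simp: bij_betw_def)
    have "j \<le> K"
    proof (rule ccontr)
      assume "\<not> j \<le> K"
      then have "\<alpha> * real j powr (-(1 + \<beta>)) < decay_threshold \<alpha> \<beta> K"
        unfolding decay_threshold_def using K beta_pos alpha_pos
        by (intro mult_strict_left_mono powr_less_mono2_neg) auto
      then show False using decay[OF j(1)] q j(2) by simp
    qed
    then show "q \<in> \<sigma> ` {1..K}" using j by auto
  qed
  then have "card {q\<in>Q. decay_threshold \<alpha> \<beta> K \<le> \<bar>u q\<bar>} \<le> card (\<sigma> ` {1..K})"
    by (intro card_mono) auto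
  also have "\<dots> \<le> K"
    using card_image_le[of "{1..K}" \<sigma>] by simp
  finally show ?thesis .
qed

lemma sum_abs_small_le:
  "(\<Sum>q\<in>Q - {q\<in>Q. decay_threshold \<alpha> \<beta> K \<le> \<bar>u q\<bar>}. \<bar>u q\<bar>) \<le> \<alpha> * (1 + 1 / \<beta>) * real K powr (- \<beta>)"
proof -
  let ?t = "decay_threshold \<alpha> \<beta> K"
  have t: "0 < ?t" using decay_threshold_pos[OF alpha_pos K] .
  have "(\<Sum>q\<in>Q - {q\<in>Q. ?t \<le> \<bar>u q\<bar>}. \<bar>u q\<bar>) = (\<Sum>q\<in>Q. if \<bar>u q\<bar> < ?t then \<bar>u q\<bar> else 0)"
    using finite_Q by (intro sum.mono_neutral_cong_left) auto
  also have "\<dots> \<le> real K * ?t + \<alpha> * real K powr (- \<beta>) / \<beta>"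
    using decay t alpha_pos K by (intro sum_le_head_tail) auto
  also have "\<dots> = \<alpha> * (1 + 1 / \<beta>) * real K powr (- \<beta>)"
    using real_mult_decay_threshold[OF K] by (simp add: algebra_simps)
  finally show ?thesis .
qed

lemma sum_pstar_weight_le:
  "(\<Sum>q\<in>Q. (u q)\<^sup>2 / ((u q)\<^sup>2 + (decay_threshold \<alpha> \<beta> K)\<^sup>2)) \<le> real K * (1 + 1 / \<beta>)"
proof -
  let ?t = "decay_threshold \<alpha> \<beta> K"
  have t: "0 < ?t" using decay_threshold_pos[OF alpha_pos K] .
  have le_1: "x\<^sup>2 / (x\<^sup>2 + ?t\<^sup>2) \<le> 1" for x :: real
  proof -
    have "0 < x\<^sup>2 + ?t\<^sup>2" using t by (simp add: add_nonneg_pos)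
    then show ?thesis by simp
  qed
  have ratio_le: "x\<^sup>2 / (x\<^sup>2 + ?t\<^sup>2) \<le> \<bar>x\<bar> / ?t" for x :: real
  proof (cases "?t \<le> \<bar>x\<bar>")
    case True
    have "x\<^sup>2 / (x\<^sup>2 + ?t\<^sup>2) \<le> 1" by (rule le_1)
    also have "1 \<le> \<bar>x\<bar> / ?t" using True t by simp
    finally show ?thesis .
  next
    case False
    have "x\<^sup>2 / (x\<^sup>2 + ?t\<^sup>2) \<le> x\<^sup>2 / ?t\<^sup>2"
      using t by (intro divide_left_mono mult_pos_pos add_nonneg_pos) auto
    also have "\<dots> = (\<bar>x\<bar> / ?t) * (\<bar>x\<bar> / ?t)" by (simp add: power2_eq_square)
    also have "\<dots> \<le> \<bar>x\<bar> / ?t" using False t by (intro mult_left_le) auto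
    finally show ?thesis .
  qed
  have "(\<Sum>q\<in>Q. (u q)\<^sup>2 / ((u q)\<^sup>2 + ?t\<^sup>2)) \<le> real K * 1 + (\<alpha> / ?t) * real K powr (- \<beta>) / \<beta>"
  proof (intro sum_le_head_tail)
    fix j assume j: "j \<in> {1..n}"
    have "(u (\<sigma> j))\<^sup>2 / ((u (\<sigma> j))\<^sup>2 + ?t\<^sup>2) \<le> \<bar>u (\<sigma> j)\<bar> / ?t" by (rule ratio_le)
    also have "\<dots> \<le> (\<alpha> / ?t) * real j powr (-(1 + \<beta>))"
      using decay[OF j] t by (simp add: divide_right_mono)
    finally show "(u (\<sigma> j))\<^sup>2 / ((u (\<sigma> j))\<^sup>2 + ?t\<^sup>2)
        \<le> (if j \<le> K then 1 else (\<alpha> / ?t) * real j powr (-(1 + \<beta>)))"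
      using le_1 by simp
  qed (use t alpha_pos K in auto)
  also have "(\<alpha> / ?t) * real K powr (- \<beta>) = real K"
    using real_mult_decay_threshold[OF K] t by (simp add: field_simps)
  finally show ?thesis by (simp add: algebra_simps)
qed

end

end

lemma ab_class_power_law_decay:
  assumes "ab_class P D \<alpha> \<beta> w" "0 < \<alpha>" "0 < \<beta>"
  obtains \<sigma> where "power_law_decay (params P D) (sw P D w) \<sigma> (card (params P D)) \<alpha> \<beta>"
  using assms unfolding ab_class_def power_law_decay_def by blast

section \<open>The network as a ridge regression\<close>

lemma finite_vecs: "finite (vecs P D)"
proof -
  have "vecs P D = {x. \<forall>i. (i \<in> {..<D} \<longrightarrow> x i \<in> {..<P}) \<and> (i \<notin> {..<D} \<longrightarrow> x i = 0)}"
    unfolding vecs_def lessThan_iff not_less by blast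
  then show ?thesis
    using finite_set_of_finite_funs[of "{..<D}" "{..<P}" 0] by simp
qed

lemma finite_params: "finite (params P D)"
  unfolding params_def by (simp add: finite_vecs)

lemma card_params_pos: "0 < P \<Longrightarrow> 0 < card (params P D)"
  using finite_params[of P D] unfolding card_gt_0_iff params_def vecs_def by auto

lemma sum_phat_le_1:
  assumes "finite V"
  shows "(\<Sum>x\<in>V. phat xs x) \<le> 1"
proof (cases "xs = []")
  case False
  have "(\<Sum>x\<in>V. card {m. m < length xs \<and> xs ! m = x}) = card (\<Union>x\<in>V. {m. m < length xs \<and> xs ! m = x})"
    using assms by (subst card_UN_disjoint) auto
  also have "\<dots> \<le> card {..<length xs}"
    by (rule card_mono) auto
  finally have "(\<Sum>x\<in>V. real (card {m. m < length xs \<and> xs ! m = x})) \<le> real (length xs)"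
    by (simp flip: of_nat_sum)
  then show ?thesis
    using False unfolding phat_def by (simp add: sum_divide_distrib[symmetric])
qed (simp add: phat_def)

lemma phat_nonneg: "0 \<le> phat xs x"
  unfolding phat_def by simp

lemma abs_node_le_1:
  assumes g: "(\<Sum>b<P. (g b)\<^sup>2) = 1" and "0 < P"
  shows "\<bar>node P D g a b x\<bar> \<le> 1"
proof -
  let ?r = "nat ((int (\<Sum>i<D. a i * x i) - int b) mod int P)"
  have "?r < P" using \<open>0 < P\<close> by (simp add: nat_less_iff)
  then have "(g ?r)\<^sup>2 \<le> 1"
    using member_le_sum[of ?r "{..<P}" "\<lambda>b. (g b)\<^sup>2"] g by simp
  then show ?thesis unfolding node_def by (simp add: abs_square_le_1)
qed

lemma netS_eq_dict_sum:
  "netS P D g w x = dict_sum (params P D) (case_prod (node P D g)) (sw P D w) x"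
  unfolding netS_def sw_def dict_sum_def by (simp add: sum_distrib_left split_def mult.assoc)

lemma subnet_eq_dict_sum:
  assumes "W \<subseteq> params P D"
  shows "subnet P D g W v x = dict_sum (params P D) (case_prod (node P D g)) (\<lambda>q. if q \<in> W then v q else 0) x"
  unfolding subnet_def dict_sum_def split_def
  using assms finite_params by (intro sum.mono_neutral_cong_left) auto

lemma objective_eq_ridge_objective:
  "objective P D g lam xs f w
     = ridge_objective (vecs P D) (params P D) (case_prod (node P D g)) (phat xs) lam f (sw P D w)"
  unfolding objective_def ridge_objective_def netS_eq_dict_sum ..

lemma sub_objective_eq_ridge_objective:
  assumes "W \<subseteq> params P D"
  shows "sub_objective P D g lam xs f W v
     = ridge_objective (vecs P D) (params P D) (case_prod (node P D g)) (phat xs) lam f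
         (\<lambda>q. if q \<in> W then v q else 0)"
proof -
  have "(\<Sum>q\<in>W. (v q)\<^sup>2) = (\<Sum>q\<in>params P D. (if q \<in> W then v q else 0)\<^sup>2)"
    using assms finite_params by (intro sum.mono_neutral_cong_left) auto
  then show ?thesis
    unfolding sub_objective_def ridge_objective_def subnet_eq_dict_sum[OF assms] by simp
qed

lemma is_wstar_minimizes_ridge_objective:
  assumes "0 < P" "is_wstar P D g lam xs f w"
  shows "ridge_objective (vecs P D) (params P D) (case_prod (node P D g)) (phat xs) lam f (sw P D w)
      \<le> ridge_objective (vecs P D) (params P D) (case_prod (node P D g)) (phat xs) lam f z"
proof -
  have "sw P D (\<lambda>q. real P powr (real D / 2) * z q) = z"
    using \<open>0 < P\<close> by (simp add: sw_def fun_eq_iff powr_add[symmetric] mult.assoc[symmetric])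
  then show ?thesis
    using assms(2) unfolding is_wstar_def objective_eq_ridge_objective by metis
qed

lemma trained_subnet_error_le:
  assumes P: "0 < P" and g: "(\<Sum>b<P. (g b)\<^sup>2) = 1" and lam: "0 \<le> lam"
    and wst: "is_wstar P D g lam xs f w" and W: "W \<subseteq> params P D"
    and tr: "is_trained P D g lam xs f W v"
  shows "(\<Sum>x\<in>vecs P D. phat xs x * (netS P D g w x - subnet P D g W v x)\<^sup>2)
      \<le> (1 + lam) * (\<Sum>q\<in>params P D - W. \<bar>sw P D w q\<bar>)\<^sup>2"
proof -
  have "sub_objective P D g lam xs f W v \<le> sub_objective P D g lam xs f W (sw P D w)"
    using tr unfolding is_trained_def by blast
  then show ?thesis
    unfolding netS_eq_dict_sum subnet_eq_dict_sum[OF W] sub_objective_eq_ridge_objective[OF W]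
    using finite_params W phat_nonneg sum_phat_le_1[OF finite_vecs] abs_node_le_1[OF g P] lam
      is_wstar_minimizes_ridge_objective[OF P wst]
    by (intro ridge_restricted_minimizer_error_le) auto
qed

lemma pstar_nonneg_sum_eq_1:
  assumes "0 < P" "0 < \<Delta>"
  shows "\<And>q. 0 \<le> pstar P D \<Delta> w q" and "(\<Sum>q\<in>params P D. pstar P D \<Delta> w q) = 1"
proof -
  define c where "c r = (sw P D w r)\<^sup>2 / ((sw P D w r)\<^sup>2 + \<Delta>)" for r
  define Z where "Z = (\<Sum>r\<in>params P D. c r)"
  have p: "pstar P D \<Delta> w q = (if Z = 0 then 1 / real (card (params P D)) else c q / Z)" for q
    unfolding pstar_def Let_def c_def Z_def ..
  have "0 \<le> c r" for r
    unfolding c_def using assms by (intro divide_nonneg_nonneg) auto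
  then show "0 \<le> pstar P D \<Delta> w q" for q
    unfolding p Z_def by (simp add: sum_nonneg)
  show "(\<Sum>q\<in>params P D. pstar P D \<Delta> w q) = 1"
    using card_params_pos[OF assms(1), of D]
    unfolding p by (cases "Z = 0") (simp_all add: Z_def sum_divide_distrib[symmetric])
qed

lemma pstar_ge:
  assumes \<Delta>: "0 < \<Delta>" and q: "q \<in> params P D" and large: "\<Delta> \<le> (sw P D w q)\<^sup>2"
    and C: "(\<Sum>r\<in>params P D. (sw P D w r)\<^sup>2 / ((sw P D w r)\<^sup>2 + \<Delta>)) \<le> C"
  shows "1 / (2 * C) \<le> pstar P D \<Delta> w q"
proof -
  define c where "c r = (sw P D w r)\<^sup>2 / ((sw P D w r)\<^sup>2 + \<Delta>)" for r
  define Z where "Z = (\<Sum>r\<in>params P D. c r)"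
  have p: "pstar P D \<Delta> w q = (if Z = 0 then 1 / real (card (params P D)) else c q / Z)"
    unfolding pstar_def Let_def c_def Z_def ..
  have half: "1 / 2 \<le> c q"
    using large \<Delta> unfolding c_def by (simp add: field_simps)
  have "c q \<le> Z"
    unfolding Z_def using q finite_params \<Delta>
    by (intro member_le_sum) (auto simp: c_def)
  with half have Z: "0 < Z" by simp
  have "Z \<le> C" using C unfolding Z_def c_def .
  have "1 / (2 * C) = (1 / 2) / C" by simp
  also have "\<dots> \<le> (1 / 2) / Z"
    using Z \<open>Z \<le> C\<close> by (intro divide_left_mono) auto
  also have "\<dots> \<le> c q / Z"
    using half Z by (intro divide_right_mono) auto
  finally show ?thesis using Z by (simp add: p)
qed

section \<open>Success probability in a fixed dimension\<close>

definition accurate_subnet :: "nat \<Rightarrow> nat \<Rightarrow> (nat \<Rightarrow> real) \<Rightarrow> real \<Rightarrow> (nat \<Rightarrow> nat) list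
    \<Rightarrow> ((nat \<Rightarrow> nat) \<Rightarrow> real) \<Rightarrow> ((nat \<Rightarrow> nat) \<times> nat \<Rightarrow> real) \<Rightarrow> nat \<Rightarrow> real
    \<Rightarrow> ((nat \<Rightarrow> nat) \<times> nat) set \<Rightarrow> bool" where
  "accurate_subnet P D g lam xs f w N B W \<longleftrightarrow> card W \<le> N \<and>
     (\<forall>v. is_trained P D g lam xs f W v \<longrightarrow>
        (\<Sum>x\<in>vecs P D. phat xs x * (netS P D g w x - subnet P D g W v x)\<^sup>2) \<le> B)"

lemma sample_prob_accurate_ge_cover:
  assumes P: "0 < P" and g: "(\<Sum>b<P. (g b)\<^sup>2) = 1" and lam: "0 \<le> lam" and \<Delta>: "0 < \<Delta>"
    and wst: "is_wstar P D g lam xs f w" and S: "S \<subseteq> params P D"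
    and B: "\<And>W. W \<subseteq> params P D \<Longrightarrow> S \<subseteq> W \<Longrightarrow> (1 + lam) * (\<Sum>q\<in>params P D - W. \<bar>sw P D w q\<bar>)\<^sup>2 \<le> B"
  shows "1 - (\<Sum>q\<in>S. (1 - pstar P D \<Delta> w q) ^ N)
      \<le> sample_prob P D \<Delta> w N (accurate_subnet P D g lam xs f w N B)"
  unfolding sample_prob_eq_sample_set_prob
proof (rule sample_set_prob_ge_cover[OF finite_params pstar_nonneg_sum_eq_1[OF P \<Delta>] S])
  fix W assume "W \<subseteq> params P D" "S \<subseteq> W" "card W \<le> N"
  then show "accurate_subnet P D g lam xs f w N B W"
    unfolding accurate_subnet_def
    using trained_subnet_error_le[OF P g lam wst] B by (blast intro: order_trans)
qed

lemma scaled_square_le_trans: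
  fixes c s T B :: real
  assumes "0 \<le> c" "0 \<le> s" "s \<le> T" "c * T\<^sup>2 \<le> B"
  shows "c * s\<^sup>2 \<le> B"
  using assms by (meson mult_left_mono order_trans power_mono)

lemma one_minus_power_le_exp:
  fixes p a :: real
  assumes "a \<le> p" "p \<le> 1"
  shows "(1 - p) ^ N \<le> exp (- real N * a)"
proof -
  have "(1 - p) ^ N \<le> exp (- p) ^ N"
    using assms exp_ge_add_one_self[of "- p"] by (intro power_mono) auto
  also have "\<dots> = exp (- real N * p)"
    by (simp add: exp_of_nat_mult[symmetric])
  also have "\<dots> \<le> exp (- real N * a)"
    using assms by (simp add: mult_left_mono)
  finally show ?thesis .
qed

context
  fixes P D :: nat and g :: "nat \<Rightarrow> real" and lam :: real and xs f w \<sigma> \<alpha> \<beta>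
  assumes P: "0 < P" and g: "(\<Sum>b<P. (g b)\<^sup>2) = 1" and lam: "0 \<le> lam"
    and wst: "is_wstar P D g lam xs f w"
    and decay: "power_law_decay (params P D) (sw P D w) \<sigma> (card (params P D)) \<alpha> \<beta>"
begin

interpretation power_law_decay "params P D" "sw P D w" \<sigma> "card (params P D)" \<alpha> \<beta>
  by (fact decay)

lemma one_le_sample_prob_accurate:
  assumes "0 < \<Delta>" and B: "(1 + lam) * (\<alpha> * (1 + 1 / \<beta>))\<^sup>2 \<le> B"
  shows "1 \<le> sample_prob P D \<Delta> w N (accurate_subnet P D g lam xs f w N B)"
proof -
  have "(1 + lam) * (\<Sum>q\<in>params P D - W. \<bar>sw P D w q\<bar>)\<^sup>2 \<le> B" for W
  proof (rule scaled_square_le_trans[OF _ sum_nonneg _ B])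
    show "(\<Sum>q\<in>params P D - W. \<bar>sw P D w q\<bar>) \<le> \<alpha> * (1 + 1 / \<beta>)"
      by (rule order_trans[OF sum_mono2[OF finite_params] sum_abs_le]) auto
  qed (use lam in auto)
  then show ?thesis
    using sample_prob_accurate_ge_cover[OF P g lam \<open>0 < \<Delta>\<close> wst, of "{}"] by simp
qed

lemma sample_prob_accurate_ge_rank:
  assumes K: "1 \<le> K"
    and B: "(1 + lam) * (\<alpha> * (1 + 1 / \<beta>) * real K powr (- \<beta>))\<^sup>2 \<le> B"
  shows "1 - real K * exp (- real N / (2 * real K * (1 + 1 / \<beta>)))
      \<le> sample_prob P D ((decay_threshold \<alpha> \<beta> K)\<^sup>2) w N (accurate_subnet P D g lam xs f w N B)"
proof -
  let ?t = "decay_threshold \<alpha> \<beta> K"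
  let ?S = "{q\<in>params P D. ?t \<le> \<bar>sw P D w q\<bar>}"
  let ?a = "1 / (2 * (real K * (1 + 1 / \<beta>)))"
  have t: "0 < ?t" by (rule decay_threshold_pos[OF alpha_pos K])
  then have \<Delta>: "0 < ?t\<^sup>2" by simp
  have miss: "(1 - pstar P D (?t\<^sup>2) w q) ^ N \<le> exp (- real N * ?a)" if "q \<in> ?S" for q
  proof (rule one_minus_power_le_exp)
    have "?t\<^sup>2 \<le> (sw P D w q)\<^sup>2"
      using power_mono[of ?t "\<bar>sw P D w q\<bar>" 2] that t by simp
    then show "?a \<le> pstar P D (?t\<^sup>2) w q"
      using that \<Delta> sum_pstar_weight_le[OF K] by (intro pstar_ge) auto
    show "pstar P D (?t\<^sup>2) w q \<le> 1"
      using that member_le_sum[of q "params P D" "pstar P D (?t\<^sup>2) w"] finite_params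
        pstar_nonneg_sum_eq_1[OF P \<Delta>] by auto
  qed
  have "1 - real K * exp (- real N / (2 * real K * (1 + 1 / \<beta>)))
      \<le> 1 - (\<Sum>q\<in>?S. (1 - pstar P D (?t\<^sup>2) w q) ^ N)"
  proof -
    have "(\<Sum>q\<in>?S. (1 - pstar P D (?t\<^sup>2) w q) ^ N) \<le> (\<Sum>q\<in>?S. exp (- real N * ?a))"
      by (rule sum_mono) (rule miss)
    also have "\<dots> = real (card ?S) * exp (- real N * ?a)"
      by simp
    also have "\<dots> \<le> real K * exp (- real N * ?a)"
      using card_large_le[OF K] by (simp add: mult_right_mono)
    finally show ?thesis by (simp add: field_simps)
  qed
  also have "\<dots> \<le> sample_prob P D (?t\<^sup>2) w N (accurate_subnet P D g lam xs f w N B)"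
  proof (rule sample_prob_accurate_ge_cover[OF P g lam \<Delta> wst])
    fix W assume "W \<subseteq> params P D" "?S \<subseteq> W"
    then have "(\<Sum>q\<in>params P D - W. \<bar>sw P D w q\<bar>) \<le> (\<Sum>q\<in>params P D - ?S. \<bar>sw P D w q\<bar>)"
      using finite_params by (intro sum_mono2) auto
    also have "\<dots> \<le> \<alpha> * (1 + 1 / \<beta>) * real K powr (- \<beta>)"
      by (rule sum_abs_small_le[OF K])
    finally show "(1 + lam) * (\<Sum>q\<in>params P D - W. \<bar>sw P D w q\<bar>)\<^sup>2 \<le> B"
      using lam by (intro scaled_square_le_trans[OF _ sum_nonneg _ B]) auto
  qed auto
  finally show ?thesis .
qed

end

section \<open>Choice of the parameters\<close>

definition rank_cutoff :: "real \<Rightarrow> real \<Rightarrow> nat" where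
  "rank_cutoff \<beta> \<epsilon> = nat \<lceil>\<epsilon> powr (- 1 / (2 * \<beta>))\<rceil>"

text \<open>For \<open>\<epsilon> \<ge> 1/2\<close> no samples are needed, since the whole \<open>l\<^sub>1\<close>-mass of \<open>w*\<close> is
  already \<open>O(\<epsilon>)\<close>; and there \<open>ln (1 / (\<epsilon> * \<delta>))\<close> may be arbitrarily small.\<close>
definition sample_size :: "real \<Rightarrow> real \<Rightarrow> real \<Rightarrow> nat" where
  "sample_size \<beta> \<epsilon> \<delta> =
     (let K = real (rank_cutoff \<beta> \<epsilon>)
      in if \<epsilon> < 1 / 2 then nat \<lceil>2 * K * (1 + 1 / \<beta>) * ln (2 * K / \<delta>)\<rceil> else 0)"

context
  fixes \<beta> \<epsilon> :: real
  assumes \<beta>: "0 < \<beta>" and \<epsilon>: "0 < \<epsilon>" "\<epsilon> < 1"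
begin

lemma powr_rank_exponent_ge_1: "1 \<le> \<epsilon> powr (- 1 / (2 * \<beta>))"
  using \<epsilon> \<beta> powr_mono2'[of "- 1 / (2 * \<beta>)" \<epsilon> 1] by (simp add: divide_nonpos_pos)

lemma rank_cutoff_bounds:
  "1 \<le> rank_cutoff \<beta> \<epsilon>" "\<epsilon> powr (- 1 / (2 * \<beta>)) \<le> real (rank_cutoff \<beta> \<epsilon>)"
  "real (rank_cutoff \<beta> \<epsilon>) \<le> 2 * \<epsilon> powr (- 1 / (2 * \<beta>))"
  using powr_rank_exponent_ge_1 of_int_ceiling_le_add_one[of "\<epsilon> powr (- 1 / (2 * \<beta>))"]
  unfolding rank_cutoff_def by linarith+

lemma rank_cutoff_powr_square_le: "(real (rank_cutoff \<beta> \<epsilon>) powr (- \<beta>))\<^sup>2 \<le> \<epsilon>"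
proof -
  let ?e = "\<epsilon> powr (- 1 / (2 * \<beta>))"
  have "real (rank_cutoff \<beta> \<epsilon>) powr (- \<beta>) \<le> ?e powr (- \<beta>)"
    using rank_cutoff_bounds(2) \<epsilon> \<beta> by (intro powr_mono2') auto
  also have "\<dots> = \<epsilon> powr (1 / 2)"
    using \<beta> by (simp add: powr_powr)
  finally have "(real (rank_cutoff \<beta> \<epsilon>) powr (- \<beta>))\<^sup>2 \<le> (\<epsilon> powr (1 / 2))\<^sup>2"
    by (intro power_mono) auto
  also have "\<dots> = \<epsilon>"
    using \<epsilon> by (simp add: powr_powr[symmetric] powr_power)
  finally show ?thesis .
qed

lemma decay_threshold_rank_cutoff_ge:
  assumes "0 < \<alpha>"
  shows "(\<alpha> * 2 powr (-(1 + \<beta>)))\<^sup>2 * \<epsilon> powr (1 + 1 / \<beta>) \<le> (decay_threshold \<alpha> \<beta> (rank_cutoff \<beta> \<epsilon>))\<^sup>2"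
proof -
  let ?e = "\<epsilon> powr (- 1 / (2 * \<beta>))"
  have "\<alpha> * (2 * ?e) powr (-(1 + \<beta>)) \<le> decay_threshold \<alpha> \<beta> (rank_cutoff \<beta> \<epsilon>)"
    unfolding decay_threshold_def
    using rank_cutoff_bounds \<beta> assms by (intro mult_left_mono powr_mono2') auto
  moreover have "(2 * ?e) powr (-(1 + \<beta>)) = 2 powr (-(1 + \<beta>)) * \<epsilon> powr ((1 + 1 / \<beta>) / 2)"
  proof -
    have "(- 1 / (2 * \<beta>)) * (-(1 + \<beta>)) = (1 + 1 / \<beta>) / 2"
      using \<beta> by (simp add: field_simps)
    then have "?e powr (-(1 + \<beta>)) = \<epsilon> powr ((1 + 1 / \<beta>) / 2)"
      by (simp only: powr_powr)
    moreover have "(2 * ?e) powr (-(1 + \<beta>)) = 2 powr (-(1 + \<beta>)) * ?e powr (-(1 + \<beta>))"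
      by (rule powr_mult)
    ultimately show ?thesis by (simp only:)
  qed
  ultimately have "(\<alpha> * 2 powr (-(1 + \<beta>)) * \<epsilon> powr ((1 + 1 / \<beta>) / 2))\<^sup>2
      \<le> (decay_threshold \<alpha> \<beta> (rank_cutoff \<beta> \<epsilon>))\<^sup>2"
    using assms by (intro power_mono) (auto simp: mult.assoc)
  also have "(\<alpha> * 2 powr (-(1 + \<beta>)) * \<epsilon> powr ((1 + 1 / \<beta>) / 2))\<^sup>2
      = (\<alpha> * 2 powr (-(1 + \<beta>)))\<^sup>2 * \<epsilon> powr (1 + 1 / \<beta>)"
    using \<epsilon> by (simp add: power_mult_distrib power2_eq_square powr_add[symmetric])
  finally show ?thesis .
qed

lemma sample_size_le:
  assumes \<delta>: "0 < \<delta>" "\<delta> < 1"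
  shows "real (sample_size \<beta> \<epsilon> \<delta>)
      \<le> (2 + 4 * (1 + 1 / \<beta>) * (7 + 1 / (2 * \<beta>))) * \<epsilon> powr (- 1 / (2 * \<beta>)) * ln (1 / (\<epsilon> * \<delta>))"
proof (cases "\<epsilon> < 1 / 2")
  case True
  define e where "e = \<epsilon> powr (- 1 / (2 * \<beta>))"
  define K where "K = real (rank_cutoff \<beta> \<epsilon>)"
  define L where "L = ln (1 / (\<epsilon> * \<delta>))"
  have e1: "1 \<le> e" and K: "1 \<le> K" "K \<le> 2 * e"
    unfolding e_def K_def using powr_rank_exponent_ge_1 rank_cutoff_bounds by auto
  have L: "L = ln (1 / \<epsilon>) + ln (1 / \<delta>)"
    unfolding L_def using \<epsilon> \<delta> by (simp add: ln_div ln_mult)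
  have ln\<epsilon>: "1 / 2 \<le> ln (1 / \<epsilon>)"
    using ln_le_minus_one[of \<epsilon>] \<epsilon> True by (simp add: ln_div)
  have ln\<delta>: "0 \<le> ln (1 / \<delta>)"
    using \<delta> by simp
  have "ln (2 * K / \<delta>) \<le> ln (4 * e / \<delta>)"
    using K \<delta> by (simp add: divide_right_mono)
  also have "\<dots> = ln 4 + ln (1 / \<epsilon>) / (2 * \<beta>) + ln (1 / \<delta>)"
    unfolding e_def using e1 \<epsilon> \<delta> by (simp add: ln_div ln_mult field_simps e_def)
  also have "\<dots> \<le> 6 * L + L / (2 * \<beta>) + L"
  proof -
    have "ln 4 \<le> 6 * L" using ln_le_minus_one[of 4] L ln\<epsilon> ln\<delta> by simp
    moreover have "ln (1 / \<epsilon>) / (2 * \<beta>) \<le> L / (2 * \<beta>)"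
      using L ln\<delta> \<beta> by (simp add: divide_right_mono)
    moreover have "ln (1 / \<delta>) \<le> L" using L ln\<epsilon> by simp
    ultimately show ?thesis by linarith
  qed
  also have "\<dots> = (7 + 1 / (2 * \<beta>)) * L"
    by (simp add: algebra_simps)
  finally have lnK: "ln (2 * K / \<delta>) \<le> (7 + 1 / (2 * \<beta>)) * L" .
  have "0 \<le> ln (2 * K / \<delta>)"
    using K \<delta> by simp
  then have "real (sample_size \<beta> \<epsilon> \<delta>) \<le> 2 * K * (1 + 1 / \<beta>) * ln (2 * K / \<delta>) + 1"
    unfolding sample_size_def K_def Let_def using True \<beta> of_int_ceiling_le_add_one by simp
  also have "\<dots> \<le> (4 * e * (1 + 1 / \<beta>)) * ((7 + 1 / (2 * \<beta>)) * L) + 2 * e * L"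
  proof (rule add_mono)
    have KM: "2 * K * (1 + 1 / \<beta>) \<le> 4 * e * (1 + 1 / \<beta>)"
      using K \<beta> by (simp add: mult_right_mono)
    show "2 * K * (1 + 1 / \<beta>) * ln (2 * K / \<delta>) \<le> (4 * e * (1 + 1 / \<beta>)) * ((7 + 1 / (2 * \<beta>)) * L)"
      by (rule mult_mono[OF KM lnK]) (use e1 \<beta> \<open>0 \<le> ln (2 * K / \<delta>)\<close> in auto)
    have "1 \<le> 2 * L" using L ln\<epsilon> ln\<delta> by simp
    then have "1 * 1 \<le> e * (2 * L)" using e1 by (intro mult_mono) auto
    then show "1 \<le> 2 * e * L" by simp
  qed
  also have "\<dots> = (2 + 4 * (1 + 1 / \<beta>) * (7 + 1 / (2 * \<beta>))) * e * L"
    by (simp add: algebra_simps)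
  finally show ?thesis unfolding e_def L_def .
next
  case False
  have "0 < ln (1 / (\<epsilon> * \<delta>))"
    using \<epsilon> \<delta> mult_strict_mono[of \<epsilon> 1 \<delta> 1] by simp
  then show ?thesis
    using False \<beta> by (simp add: sample_size_def)
qed

lemma sample_size_sufficient:
  assumes "\<epsilon> < 1 / 2" and \<delta>: "0 < \<delta>"
  shows "real (rank_cutoff \<beta> \<epsilon>) * exp (- real (sample_size \<beta> \<epsilon> \<delta>) / (2 * real (rank_cutoff \<beta> \<epsilon>) * (1 + 1 / \<beta>)))
      \<le> \<delta> / 2"
proof -
  define K where "K = real (rank_cutoff \<beta> \<epsilon>)"
  define M where "M = 2 * K * (1 + 1 / \<beta>)"
  have K: "1 \<le> K" unfolding K_def using rank_cutoff_bounds by simp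
  have M: "0 < M" unfolding M_def using K \<beta> by (simp add: add_pos_pos)
  have "M * ln (2 * K / \<delta>) \<le> real (sample_size \<beta> \<epsilon> \<delta>)"
    unfolding sample_size_def M_def K_def Let_def using \<open>\<epsilon> < 1 / 2\<close> by (simp add: real_nat_ceiling_ge)
  then have "exp (- real (sample_size \<beta> \<epsilon> \<delta>) / M) \<le> exp (- ln (2 * K / \<delta>))"
    using M by (simp add: field_simps)
  also have "\<dots> = \<delta> / (2 * K)"
    using K \<delta> by (simp add: exp_minus)
  finally show ?thesis
    using K unfolding M_def K_def[symmetric] by (simp add: field_simps)
qed

end

lemma sample_prob_accurate_gt:
  assumes P: "0 < P" and g: "(\<Sum>b<P. (g b)\<^sup>2) = 1" and lam: "0 \<le> lam"
    and \<alpha>: "0 < \<alpha>" and \<beta>: "0 < \<beta>" and \<epsilon>: "0 < \<epsilon>" "\<epsilon> < 1" and \<delta>: "0 < \<delta>" "\<delta> < 1"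
    and wst: "is_wstar P D g lam xs f w" and ab: "ab_class P D \<alpha> \<beta> w"
  shows "1 - \<delta> < sample_prob P D ((decay_threshold \<alpha> \<beta> (rank_cutoff \<beta> \<epsilon>))\<^sup>2) w (sample_size \<beta> \<epsilon> \<delta>)
     (accurate_subnet P D g lam xs f w (sample_size \<beta> \<epsilon> \<delta>) (2 * (1 + lam) * (\<alpha> * (1 + 1 / \<beta>))\<^sup>2 * \<epsilon>))"
    (is "_ < sample_prob P D ?\<Delta> w ?N (accurate_subnet P D g lam xs f w ?N ?B)")
proof -
  let ?K = "rank_cutoff \<beta> \<epsilon>"
  obtain \<sigma> where decay: "power_law_decay (params P D) (sw P D w) \<sigma> (card (params P D)) \<alpha> \<beta>"
    using ab_class_power_law_decay[OF ab \<alpha> \<beta>] .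
  have K: "1 \<le> ?K" using rank_cutoff_bounds[OF \<beta> \<epsilon>] by simp
  show ?thesis
  proof (cases "\<epsilon> < 1 / 2")
    case True
    have "(1 + lam) * (\<alpha> * (1 + 1 / \<beta>) * real ?K powr (- \<beta>))\<^sup>2
        = (1 + lam) * (\<alpha> * (1 + 1 / \<beta>))\<^sup>2 * (real ?K powr (- \<beta>))\<^sup>2"
      by (simp add: power_mult_distrib)
    also have "\<dots> \<le> (1 + lam) * (\<alpha> * (1 + 1 / \<beta>))\<^sup>2 * \<epsilon>"
      using rank_cutoff_powr_square_le[OF \<beta> \<epsilon>] lam by (intro mult_left_mono) auto
    also have "\<dots> \<le> ?B"
      by (intro mult_right_mono) (use lam \<epsilon> in auto)
    finally have "1 - real ?K * exp (- real ?N / (2 * real ?K * (1 + 1 / \<beta>)))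
        \<le> sample_prob P D ?\<Delta> w ?N (accurate_subnet P D g lam xs f w ?N ?B)"
      by (rule sample_prob_accurate_ge_rank[OF P g lam wst decay K])
    moreover have "real ?K * exp (- real ?N / (2 * real ?K * (1 + 1 / \<beta>))) \<le> \<delta> / 2"
      using sample_size_sufficient[OF \<beta> \<epsilon> True \<delta>(1)] .
    ultimately show ?thesis using \<delta> by linarith
  next
    case False
    have \<Delta>: "0 < ?\<Delta>" using decay_threshold_pos[OF \<alpha> K, of \<beta>] by simp
    have "(1 + lam) * (\<alpha> * (1 + 1 / \<beta>))\<^sup>2 * 1 \<le> (1 + lam) * (\<alpha> * (1 + 1 / \<beta>))\<^sup>2 * (2 * \<epsilon>)"
      using False lam by (intro mult_left_mono) auto
    then have "(1 + lam) * (\<alpha> * (1 + 1 / \<beta>))\<^sup>2 \<le> ?B"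
      by (simp add: algebra_simps)
    then have "1 \<le> sample_prob P D ?\<Delta> w ?N (accurate_subnet P D g lam xs f w ?N ?B)"
      by (rule one_le_sample_prob_accurate[OF P g lam wst decay \<Delta>])
    then show ?thesis using \<delta> by linarith
  qed
qed

theorem theorem5:
  fixes P :: nat and g :: "nat \<Rightarrow> real" and lam \<alpha> \<beta> :: real
  assumes "prime P"
    and "(\<Sum>b<P. g b) = 0"
    and "(\<Sum>b<P. (g b)\<^sup>2) = 1"
    and "lam > 0" and "\<alpha> > 0" and "\<beta> > 0"
  shows "\<exists>cD > 0. \<exists>cN > 0. \<exists>cE > 0. \<forall>\<epsilon> \<delta>. 0 < \<epsilon> \<and> \<epsilon> < 1 \<and> 0 < \<delta> \<and> \<delta> < 1 \<longrightarrow>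
    (\<exists>\<Delta> > 0. \<exists>N :: nat.
       \<Delta> \<ge> cD * \<epsilon> powr (1 + 1 / \<beta>)
     \<and> real N \<le> cN * \<epsilon> powr (- 1 / (2 * \<beta>)) * ln (1 / (\<epsilon> * \<delta>))
     \<and> (\<forall>(F :: nat \<Rightarrow> (nat \<Rightarrow> nat) \<Rightarrow> real) (X :: nat \<Rightarrow> (nat \<Rightarrow> nat) list)
          (Wst :: nat \<Rightarrow> (nat \<Rightarrow> nat) \<times> nat \<Rightarrow> real).
          (\<forall>D\<ge>1. X D \<noteq> [] \<and> set (X D) \<subseteq> vecs P D
                  \<and> is_wstar P D g lam (X D) (F D) (Wst D)
                  \<and> ab_class P D \<alpha> \<beta> (Wst D))
          \<longrightarrow> (\<forall>D\<ge>1.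
                sample_prob P D \<Delta> (Wst D) N
                  (\<lambda>W. card W \<le> N \<and>
                     (\<forall>v. is_trained P D g lam (X D) (F D) W v \<longrightarrow>
                        (\<Sum>x\<in>vecs P D. phat (X D) x *
                           (netS P D g (Wst D) x - subnet P D g W v x)\<^sup>2) \<le> cE * \<epsilon>))
                > 1 - \<delta>)))"
proof -
  have P: "0 < P" using \<open>prime P\<close> prime_gt_0_nat by blast
  have lam: "0 \<le> lam" using \<open>lam > 0\<close> by simp
  define cD where "cD = (\<alpha> * 2 powr (-(1 + \<beta>)))\<^sup>2"
  define cN where "cN = 2 + 4 * (1 + 1 / \<beta>) * (7 + 1 / (2 * \<beta>))"
  define cE where "cE = 2 * (1 + lam) * (\<alpha> * (1 + 1 / \<beta>))\<^sup>2"
  have pos: "0 < cD" "0 < cN" "0 < cE"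
    unfolding cD_def cN_def cE_def using assms
    by (intro mult_pos_pos add_pos_pos zero_less_power; simp)+
  show ?thesis
    apply (rule exI[of _ cD], rule conjI[OF pos(1)])
    apply (rule exI[of _ cN], rule conjI[OF pos(2)])
    apply (rule exI[of _ cE], rule conjI[OF pos(3)])
    apply (intro allI impI)
    subgoal for \<epsilon> \<delta>
      apply (rule exI[of _ "(decay_threshold \<alpha> \<beta> (rank_cutoff \<beta> \<epsilon>))\<^sup>2"])
      apply (intro conjI exI[of _ "sample_size \<beta> \<epsilon> \<delta>"] allI impI)
      subgoal
        using decay_threshold_pos[of \<alpha> "rank_cutoff \<beta> \<epsilon>" \<beta>] rank_cutoff_bounds[of \<beta> \<epsilon>] assms
        by simp
      subgoal
        using decay_threshold_rank_cutoff_ge[of \<beta> \<epsilon> \<alpha>] assms by (simp add: cD_def)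
      subgoal
        using sample_size_le[of \<beta> \<epsilon> \<delta>] assms by (simp add: cN_def)
      subgoal for F X Wst D
        using sample_prob_accurate_gt[OF P assms(3) lam assms(5,6), of \<epsilon> \<delta> D "X D" "F D" "Wst D"]
        by (simp add: cE_def accurate_subnet_def[abs_def])
      done
    done
qed

end
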